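(* Let $n\ge 1$, $\rho\in(0,1)$, $\alpha\ge 0$, and let $F:\mathbb{R}^n\to\mathbb{R}^n$ be $\rho$-Lipschitz with $F(x)=Gx+\xi(x)$, where $G\in\mathbb{R}^{n\times n}$ is symmetric positive semidefinite with $G\preccurlyeq\rho I$ and $\xi:\mathbb{R}^n\to\mathbb{R}^n$ is $\alpha$-Lipschitz. Let $C\ge1$, $k\ge1$ an integer, $x_0\in\mathbb{R}^n$, $\varepsilon>0$. Let $x_{i+1}=F(x_i)$ for $i=0,\dots,k$, $R=[x_0-x_1,\dots,x_k-x_{k+1}]$, and suppose $\tilde c\in\mathbb{R}^{k+1}$ satisfies $\mathbf 1^T\tilde c=1$, $\|\tilde c\|_1\le C$ and $$\|R\tilde c\|\le \min\{\|Rc\|:\mathbf 1^Tc=1,\ \|c\|_1\le C\}+\varepsilon\|F(x_0)-x_0\|.$$ Let $x_e=\sum_{i=0}^k\tilde c_ix_i$. Then $$\|F(x_e)-x_e\|\le\Big(\max_{x\in[0,\rho]}|p_*(x)|+3C\alpha k+\varepsilon\Big)\|F(x_0)-x_0\|,$$ where $p_*$ is any minimizer of $\max_{x\in[0,\rho]}|p(x)|$ over $p\in\mathbb{R}_k[X]$ with $p(1)=1$, $\|p\|_1\le C$.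
   Context: $\|\cdot\|$ is the Euclidean norm. $\mathbb{R}_k[X]$ is the space of real polynomials of degree at most $k$; $\|p\|_1$ is the sum of the absolute values of the coefficients of $p$, and $\|c\|_1=\sum_i|c_i|$ for vectors. *)

theory Defs
  imports "HOL-Analysis.Analysis" "HOL-Computational_Algebra.Polynomial"
begin

definition poly_l1 :: "real poly \<Rightarrow> real" where
  "poly_l1 p = (\<Sum>i\<le>degree p. \<bar>coeff p i\<bar>)"

definition admissible_poly :: "nat \<Rightarrow> real \<Rightarrow> real poly \<Rightarrow> bool" where
  "admissible_poly k C p \<longleftrightarrow> degree p \<le> k \<and> poly p 1 = 1 \<and> poly_l1 p \<le> C"

definition poly_max_abs :: "real \<Rightarrow> real poly \<Rightarrow> real" where
  "poly_max_abs \<rho> p = (SUP x\<in>{0..\<rho>}. \<bar>poly p x\<bar>)"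

end

theory Submission
  imports Defs
begin

(*
  Write x_i = F^i x0 and r_i = x_i - x_(i+1).  Since r_(i+1) = G r_i + (xi x_i - xi x_(i+1))
  and G is nonexpansive, r_i stays within i alpha |r_0| of G^i r_0.  Hence, for the
  coefficient vector c of an admissible polynomial p, the combination R c equals
  p(G) r_0 up to C k alpha |r_0|, and |p(G)| <= max_[0,rho] |p| because G is symmetric with
  spectrum in [0,rho]; the near-optimal weights do at most eps |r_0| worse.  Finally
  F(x_e) - x_e = -R c~ + (xi (sum c~_i x_i) - sum c~_i xi(x_i)), and this defect of xi is at
  most 2 C alpha k |r_0| since every x_i lies within k |r_0| of x_0.

  The spectral bound avoids diagonalisation: a maximiser of the Rayleigh quotient is an
  eigenvector, its orthogonal complement in an invariant subspace is again invariant, and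
  induction on the dimension finishes.
*)

definition self_adjoint :: "('a::real_inner \<Rightarrow> 'a) \<Rightarrow> bool" where
  "self_adjoint f \<longleftrightarrow> (\<forall>x y. f x \<bullet> y = x \<bullet> f y)"

lemma self_adjoint_matrix_vector_mult:
  fixes G :: "real^'n^'n"
  assumes "transpose G = G"
  shows "self_adjoint ((*v) G)"
  unfolding self_adjoint_def
  by (metis assms dot_lmul_matrix vector_transpose_matrix)

lemma self_adjoint_nonneg_form_eq_0:
  assumes lin: "linear A" and sa: "self_adjoint A" and S: "subspace S"
    and nonneg: "\<And>y. y \<in> S \<Longrightarrow> 0 \<le> y \<bullet> A y"
    and e: "e \<in> S" "A e \<in> S" and zero: "e \<bullet> A e = 0"
  shows "A e = 0"
proof (rule ccontr)
  define a where "a = A e"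
  define q where "q = a \<bullet> A a"
  assume "A e \<noteq> 0"
  then have a_pos: "0 < a \<bullet> a"
    by (simp add: a_def)
  define t where "t = a \<bullet> a / (\<bar>q\<bar> + 1)"
  have t_pos: "0 < t"
    using a_pos by (simp add: t_def)
  \<comment> \<open>the form is nonnegative along the line \<open>e - t a\<close>, but has slope \<open>-2 (a \<bullet> a)\<close> at \<open>t = 0\<close>\<close>
  have "0 \<le> (e - t *\<^sub>R a) \<bullet> A (e - t *\<^sub>R a)"
    using e S by (simp add: a_def nonneg subspace_diff subspace_scale)
  also have "\<dots> = e \<bullet> A e - t * (e \<bullet> A a) - t * (a \<bullet> a) + t * t * q"
    by (simp add: linear_diff[OF lin] linear_scale[OF lin] a_def q_def algebra_simps)
  also have "e \<bullet> A a = a \<bullet> a"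
    using sa unfolding self_adjoint_def a_def by metis
  finally have "0 \<le> t * (t * q - 2 * (a \<bullet> a))"
    using zero by (simp add: algebra_simps)
  then have "2 * (a \<bullet> a) \<le> t * q"
    using t_pos by (simp add: zero_le_mult_iff)
  also have "\<dots> \<le> t * \<bar>q\<bar>"
    using t_pos by (intro mult_left_mono) auto
  also have "\<dots> < a \<bullet> a"
    using a_pos by (simp add: t_def field_simps)
  finally show False
    using a_pos by simp
qed

lemma self_adjoint_eigenvector:
  fixes f :: "'a::euclidean_space \<Rightarrow> 'a"
  assumes lin: "linear f" and sa: "self_adjoint f" and S: "subspace S"
    and inv: "f ` S \<subseteq> S" and nontriv: "S \<noteq> {0}"
  obtains e where "e \<in> S" "norm e = 1" "f e = (e \<bullet> f e) *\<^sub>R e"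
proof -
  define K where "K = S \<inter> sphere 0 1"
  have "compact K"
    unfolding K_def using closed_subspace[OF S] by (simp add: closed_Int_compact)
  moreover obtain u where "u \<in> S" "u \<noteq> 0"
    using nontriv S subspace_0 by blast
  then have "u /\<^sub>R norm u \<in> K"
    using S unfolding K_def by (simp add: subspace_scale)
  then have "K \<noteq> {}"
    by blast
  moreover have "continuous_on K (\<lambda>x. x \<bullet> f x)"
    using lin by (intro continuous_intros linear_continuous_on) (simp add: linear_conv_bounded_linear)
  ultimately obtain e where e: "e \<in> K" and e_max: "\<And>y. y \<in> K \<Longrightarrow> y \<bullet> f y \<le> e \<bullet> f e"
    using continuous_attains_sup[of K "\<lambda>x. x \<bullet> f x"] by auto
  \<comment> \<open>with \<open>l\<close> the maximal Rayleigh quotient, \<open>l - f\<close> is positive semidefinite on \<open>S\<close>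
     and its form vanishes at the maximiser \<open>e\<close>\<close>
  define l where "l = e \<bullet> f e"
  define A where "A x = l *\<^sub>R x - f x" for x
  have eS: "e \<in> S" and e_norm: "norm e = 1"
    using e unfolding K_def by auto
  have "linear A"
    unfolding A_def using lin by (intro linear_compose_sub linear_scale_self)
  moreover have "self_adjoint A"
    using sa by (simp add: self_adjoint_def A_def inner_diff_left inner_diff_right)
  moreover have "0 \<le> y \<bullet> A y" if "y \<in> S" for y
  proof (cases "y = 0")
    case False
    have "y /\<^sub>R norm y \<in> K"
      using that S False unfolding K_def by (simp add: subspace_scale)
    from e_max[OF this] have "(y \<bullet> f y) / (norm y)\<^sup>2 \<le> l"
      by (simp add: l_def linear_scale[OF lin] power2_eq_square divide_inverse mult_ac)
    then have "y \<bullet> f y \<le> l * (y \<bullet> y)"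
      using False by (simp add: divide_le_eq power2_norm_eq_inner)
    then show ?thesis
      by (simp add: A_def inner_diff_right)
  qed (simp add: A_def)
  moreover have "A e \<in> S"
    unfolding A_def using S eS inv by (auto intro: subspace_diff subspace_scale)
  moreover have "e \<bullet> A e = 0"
    using e_norm by (simp add: A_def l_def inner_diff_right power2_norm_eq_inner[symmetric])
  ultimately have "A e = 0"
    using self_adjoint_nonneg_form_eq_0 S eS by blast
  then show ?thesis
    using that eS e_norm by (simp add: A_def l_def)
qed

definition poly_apply :: "real poly \<Rightarrow> ('a::real_vector \<Rightarrow> 'a) \<Rightarrow> 'a \<Rightarrow> 'a" where
  "poly_apply p f v = (\<Sum>i\<le>degree p. coeff p i *\<^sub>R (f ^^ i) v)"

lemma poly_apply_eq_sum:
  assumes "degree p \<le> n"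
  shows "poly_apply p f v = (\<Sum>i\<le>n. coeff p i *\<^sub>R (f ^^ i) v)"
  unfolding poly_apply_def using assms
  by (intro sum.mono_neutral_left) (auto simp: coeff_eq_0)

lemma linear_funpow:
  fixes f :: "'a::real_vector \<Rightarrow> 'a"
  assumes "linear f"
  shows "linear (f ^^ i)"
  using assms
  by (induction i) (simp_all add: linear_compose linear_id)

lemma linear_poly_apply: "linear f \<Longrightarrow> linear (poly_apply p f)"
  unfolding poly_apply_def[abs_def]
  by (intro linear_compose_sum ballI linear_compose_scale_right linear_funpow)

lemma poly_apply_in_subspace:
  assumes "subspace S" "f ` S \<subseteq> S" "v \<in> S"
  shows "poly_apply p f v \<in> S"
proof -
  have "(f ^^ i) v \<in> S" for i
    using assms by (induction i) auto
  then show ?thesis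
    unfolding poly_apply_def using assms(1) by (intro subspace_sum subspace_scale)
qed

lemma poly_apply_eigenvector:
  assumes "linear f" "f e = l *\<^sub>R e"
  shows "poly_apply p f e = poly p l *\<^sub>R e"
proof -
  have "(f ^^ i) e = l ^ i *\<^sub>R e" for i
    using assms by (induction i) (simp_all add: linear_scale)
  then show ?thesis
    by (simp add: poly_apply_def poly_altdef scaleR_sum_left)
qed

lemma norm_add_orthogonal_le:
  assumes "orthogonal a b" "orthogonal c d"
    and "norm a \<le> M * norm c" "norm b \<le> M * norm d" "0 \<le> M"
  shows "norm (a + b) \<le> M * norm (c + d)"
proof -
  have "(norm (a + b))\<^sup>2 = (norm a)\<^sup>2 + (norm b)\<^sup>2"
    using assms(1) by (rule norm_add_Pythagorean)
  also have "\<dots> \<le> (M * norm c)\<^sup>2 + (M * norm d)\<^sup>2"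
    using assms(3,4) by (intro add_mono power_mono) auto
  also have "\<dots> = (M * norm (c + d))\<^sup>2"
    using norm_add_Pythagorean[OF assms(2)] by (simp add: power_mult_distrib algebra_simps)
  finally show ?thesis
    by (rule power2_le_imp_le) (simp add: assms(5))
qed

lemma self_adjoint_orthogonal_complement_invariant:
  assumes "self_adjoint f" "f e = l *\<^sub>R e" "f ` S \<subseteq> S"
  shows "f ` (S \<inter> {x. e \<bullet> x = 0}) \<subseteq> S \<inter> {x. e \<bullet> x = 0}"
proof -
  have "e \<bullet> f u = l * (e \<bullet> u)" for u
    using assms(1,2) unfolding self_adjoint_def by (metis inner_scaleR_left)
  then show ?thesis
    using assms(3) by auto
qed

lemma dim_inter_hyperplane_less:
  fixes e :: "'a::euclidean_space"
  assumes "subspace S" "e \<in> S" "e \<noteq> 0"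
  shows "dim (S \<inter> {x. e \<bullet> x = 0}) < dim S"
proof -
  have "e \<notin> S \<inter> {x. e \<bullet> x = 0}"
    using assms(3) by simp
  then have "S \<inter> {x. e \<bullet> x = 0} \<subset> S"
    using assms(2) by blast
  moreover have "span (S \<inter> {x. e \<bullet> x = 0}) = S \<inter> {x. e \<bullet> x = 0}" "span S = S"
    using subspace_inter[OF assms(1) subspace_hyperplane] assms(1) by simp_all
  ultimately have "span (S \<inter> {x. e \<bullet> x = 0}) \<subset> span S"
    by (simp only:)
  then show ?thesis
    by (rule dim_psubset)
qed

lemma norm_poly_apply_le_subspace:
  fixes f :: "'a::euclidean_space \<Rightarrow> 'a"
  assumes lin: "linear f" and sa: "self_adjoint f"
    and lower: "\<And>v. lo * (v \<bullet> v) \<le> v \<bullet> f v" and upper: "\<And>v. v \<bullet> f v \<le> hi * (v \<bullet> v)"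
    and bound: "\<And>x. lo \<le> x \<Longrightarrow> x \<le> hi \<Longrightarrow> \<bar>poly p x\<bar> \<le> M"
    and "subspace S" "f ` S \<subseteq> S" "v \<in> S"
  shows "norm (poly_apply p f v) \<le> M * norm v"
  using assms(6-8)
proof (induction "dim S" arbitrary: S v rule: less_induct)
  case less
  show ?case
  proof (cases "S = {0}")
    case True
    then show ?thesis
      using less.prems linear_0[OF linear_poly_apply[OF lin]] by simp
  next
    case False
    obtain e where eS: "e \<in> S" and e_norm: "norm e = 1" and e_eig: "f e = (e \<bullet> f e) *\<^sub>R e"
      using self_adjoint_eigenvector[OF lin sa less.prems(1,2) False] .
    define l where "l = e \<bullet> f e"
    have ee: "e \<bullet> e = 1"
      using e_norm by (simp add: norm_eq_1)
    have "\<bar>poly p l\<bar> \<le> M"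
      using lower[of e] upper[of e] ee by (intro bound) (simp_all add: l_def)
    then have M: "0 \<le> M"
      by linarith
    define S' where "S' = S \<inter> {x. e \<bullet> x = 0}"
    have S': "subspace S'"
      unfolding S'_def using less.prems(1) subspace_hyperplane by (rule subspace_inter)
    have inv': "f ` S' \<subseteq> S'"
      unfolding S'_def using sa e_eig less.prems(2) by (rule self_adjoint_orthogonal_complement_invariant)
    have "dim S' < dim S"
      unfolding S'_def using less.prems(1) eS e_norm by (intro dim_inter_hyperplane_less) auto
    define w where "w = v - (e \<bullet> v) *\<^sub>R e"
    have wS': "w \<in> S'"
      using less.prems(1,3) eS ee unfolding w_def S'_def
      by (simp add: subspace_diff subspace_scale inner_diff_right)
    have IH: "norm (poly_apply p f w) \<le> M * norm w"
      using less.hyps[OF \<open>dim S' < dim S\<close> S' inv' wS'] .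
    have "poly_apply p f w \<in> S'"
      using S' inv' wS' by (rule poly_apply_in_subspace)
    then have "orthogonal ((e \<bullet> v * poly p l) *\<^sub>R e) (poly_apply p f w)"
      unfolding S'_def by (simp add: orthogonal_def)
    moreover have "orthogonal ((e \<bullet> v) *\<^sub>R e) w"
      using wS' unfolding S'_def by (simp add: orthogonal_def)
    moreover have "norm ((e \<bullet> v * poly p l) *\<^sub>R e) \<le> M * norm ((e \<bullet> v) *\<^sub>R e)"
      using \<open>\<bar>poly p l\<bar> \<le> M\<close> e_norm by (simp add: abs_mult mult_left_mono mult.commute[of M])
    ultimately have "norm ((e \<bullet> v * poly p l) *\<^sub>R e + poly_apply p f w)
        \<le> M * norm ((e \<bullet> v) *\<^sub>R e + w)"
      using IH M by (rule norm_add_orthogonal_le)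
    moreover have "poly_apply p f v = (e \<bullet> v * poly p l) *\<^sub>R e + poly_apply p f w"
      using poly_apply_eigenvector[OF lin, of e l p] e_eig linear_diff[OF linear_poly_apply[OF lin]]
        linear_scale[OF linear_poly_apply[OF lin]]
      by (simp add: w_def l_def)
    ultimately show ?thesis
      by (simp add: w_def)
  qed
qed

lemma norm_poly_apply_le:
  fixes f :: "'a::euclidean_space \<Rightarrow> 'a"
  assumes "linear f" "self_adjoint f"
    and "\<And>v. lo * (v \<bullet> v) \<le> v \<bullet> f v" "\<And>v. v \<bullet> f v \<le> hi * (v \<bullet> v)"
    and "\<And>x. lo \<le> x \<Longrightarrow> x \<le> hi \<Longrightarrow> \<bar>poly p x\<bar> \<le> M"
  shows "norm (poly_apply p f v) \<le> M * norm v"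
  using norm_poly_apply_le_subspace[OF assms subspace_UNIV] by simp

lemma norm_self_adjoint_le:
  fixes f :: "'a::euclidean_space \<Rightarrow> 'a"
  assumes "linear f" "self_adjoint f"
    and "\<And>v. lo * (v \<bullet> v) \<le> v \<bullet> f v" "\<And>v. v \<bullet> f v \<le> hi * (v \<bullet> v)"
    and "\<bar>lo\<bar> \<le> M" "\<bar>hi\<bar> \<le> M"
  shows "norm (f v) \<le> M * norm v"
proof -
  have "norm (poly_apply [:0, 1:] f v) \<le> M * norm v"
    using assms(5,6) by (intro norm_poly_apply_le[OF assms(1-4)]) auto
  then show ?thesis
    by (simp add: poly_apply_def)
qed

lemma poly_eq_sum:
  fixes p :: "'a::comm_semiring_1 poly"
  assumes "degree p \<le> n"
  shows "poly p x = (\<Sum>i\<le>n. coeff p i * x ^ i)"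
  unfolding poly_altdef using assms
  by (intro sum.mono_neutral_left) (auto simp: coeff_eq_0)

lemma poly_l1_eq_sum:
  assumes "degree p \<le> n"
  shows "poly_l1 p = (\<Sum>i\<le>n. \<bar>coeff p i\<bar>)"
  unfolding poly_l1_def using assms
  by (intro sum.mono_neutral_left) (auto simp: coeff_eq_0)

lemma admissible_poly_coeffs:
  assumes "admissible_poly k C p"
  shows "(\<Sum>i\<le>k. coeff p i) = 1" "(\<Sum>i\<le>k. \<bar>coeff p i\<bar>) \<le> C"
  using assms poly_eq_sum[of p k 1] poly_l1_eq_sum[of p k]
  unfolding admissible_poly_def by simp_all

lemma abs_poly_le_poly_max_abs:
  assumes "0 \<le> x" "x \<le> \<rho>"
  shows "\<bar>poly p x\<bar> \<le> poly_max_abs \<rho> p"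
proof -
  have "compact ((\<lambda>x. \<bar>poly p x\<bar>) ` {0..\<rho>})"
    by (intro compact_continuous_image continuous_intros) auto
  then have "bdd_above ((\<lambda>x. \<bar>poly p x\<bar>) ` {0..\<rho>})"
    by (intro bounded_imp_bdd_above compact_imp_bounded)
  then show ?thesis
    unfolding poly_max_abs_def using assms by (intro cSUP_upper) auto
qed

lemma norm_sum_scaleR_le:
  assumes "\<And>i. i \<in> A \<Longrightarrow> norm (v i) \<le> B" "0 \<le> B"
  shows "norm (\<Sum>i\<in>A. a i *\<^sub>R v i) \<le> (\<Sum>i\<in>A. \<bar>a i\<bar>) * B"
proof -
  have "norm (\<Sum>i\<in>A. a i *\<^sub>R v i) \<le> (\<Sum>i\<in>A. \<bar>a i\<bar> * norm (v i))"
    using norm_sum[of "\<lambda>i. a i *\<^sub>R v i" A] by simp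
  also have "\<dots> \<le> (\<Sum>i\<in>A. \<bar>a i\<bar> * B)"
    using assms(1) by (intro sum_mono mult_left_mono) auto
  finally show ?thesis
    by (simp add: sum_distrib_right)
qed

lemma norm_funpow_step_le:
  fixes F :: "'a::real_normed_vector \<Rightarrow> 'a"
  assumes "L-lipschitz_on UNIV F" "L \<le> 1"
  shows "norm ((F ^^ i) x - (F ^^ Suc i) x) \<le> norm (F x - x)"
proof (induction i)
  case (Suc i)
  have "norm ((F ^^ Suc i) x - (F ^^ Suc (Suc i)) x) \<le> L * norm ((F ^^ i) x - (F ^^ Suc i) x)"
    using lipschitz_onD[OF assms(1), of "(F ^^ i) x" "(F ^^ Suc i) x"] by (simp add: dist_norm)
  also have "\<dots> \<le> norm ((F ^^ i) x - (F ^^ Suc i) x)"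
    using assms(2) by (simp add: mult_left_le_one_le lipschitz_on_nonneg[OF assms(1)])
  finally show ?case
    using Suc by linarith
qed (simp add: norm_minus_commute)

lemma norm_sub_le_steps:
  fixes x :: "nat \<Rightarrow> 'a::real_normed_vector"
  assumes "\<And>j. j < i \<Longrightarrow> norm (x j - x (Suc j)) \<le> d"
  shows "norm (x i - x 0) \<le> real i * d"
  using assms
proof (induction i)
  case (Suc i)
  have "norm (x (Suc i) - x 0) \<le> norm (x i - x 0) + norm (x i - x (Suc i))"
    using norm_triangle_ineq4[of "x i - x 0" "x i - x (Suc i)"] by simp
  also have "\<dots> \<le> real i * d + d"
    using Suc by (intro add_mono) auto
  finally show ?case
    by (simp add: algebra_simps)
qed simp

lemma norm_funpow_sub_le:
  fixes F :: "'a::real_normed_vector \<Rightarrow> 'a"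
  assumes "L-lipschitz_on UNIV F" "L \<le> 1" "i \<le> n"
  shows "norm ((F ^^ i) x - x) \<le> real n * norm (F x - x)"
proof -
  have "norm ((F ^^ i) x - x) \<le> real i * norm (F x - x)"
    using norm_sub_le_steps[of i "\<lambda>j. (F ^^ j) x"] norm_funpow_step_le[OF assms(1,2)] by simp
  also have "\<dots> \<le> real n * norm (F x - x)"
    using assms(3) by (intro mult_right_mono) auto
  finally show ?thesis .
qed

lemma norm_sub_funpow_le:
  assumes lin: "linear L" and nonexp: "\<And>v. norm (L v) \<le> norm v"
    and step: "\<And>j. j < i \<Longrightarrow> norm (r (Suc j) - L (r j)) \<le> \<delta>"
  shows "norm (r i - (L ^^ i) (r 0)) \<le> real i * \<delta>"
  using step
proof (induction i)
  case (Suc i)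
  have "r (Suc i) - (L ^^ Suc i) (r 0) = (r (Suc i) - L (r i)) + L (r i - (L ^^ i) (r 0))"
    by (simp add: linear_diff[OF lin])
  then have "norm (r (Suc i) - (L ^^ Suc i) (r 0))
      \<le> norm (r (Suc i) - L (r i)) + norm (L (r i - (L ^^ i) (r 0)))"
    by (metis norm_triangle_ineq)
  also have "\<dots> \<le> \<delta> + real i * \<delta>"
  proof (rule add_mono)
    show "norm (r (Suc i) - L (r i)) \<le> \<delta>"
      using Suc.prems by simp
    have "norm (r i - (L ^^ i) (r 0)) \<le> real i * \<delta>"
      using Suc by simp
    then show "norm (L (r i - (L ^^ i) (r 0))) \<le> real i * \<delta>"
      using nonexp[of "r i - (L ^^ i) (r 0)"] by linarith
  qed
  finally show ?case
    by (simp add: algebra_simps)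
qed simp

lemma norm_lipschitz_combination_defect_le:
  fixes \<xi> :: "'a::real_normed_vector \<Rightarrow> 'b::real_normed_vector" and c :: "'i \<Rightarrow> real"
  assumes lip: "\<alpha>-lipschitz_on UNIV \<xi>"
    and sum1: "(\<Sum>i\<in>A. c i) = 1" and l1: "(\<Sum>i\<in>A. \<bar>c i\<bar>) \<le> C"
    and near: "\<And>i. i \<in> A \<Longrightarrow> norm (x i - y) \<le> D"
  shows "norm (\<xi> (\<Sum>i\<in>A. c i *\<^sub>R x i) - (\<Sum>i\<in>A. c i *\<^sub>R \<xi> (x i))) \<le> 2 * \<alpha> * C * D"
proof -
  define xe where "xe = (\<Sum>i\<in>A. c i *\<^sub>R x i)"
  obtain j where "j \<in> A"
    using sum1 by fastforce
  then have D: "0 \<le> D"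
    using near[of j] norm_ge_zero order_trans by blast
  have \<alpha>: "0 \<le> \<alpha>"
    using lip by (rule lipschitz_on_nonneg)
  have xi_near: "norm (\<xi> u - \<xi> y) \<le> \<alpha> * norm (u - y)" for u
    using lipschitz_onD[OF lip, of u y] by (simp add: dist_norm)
  \<comment> \<open>since the weights sum to 1, both terms may be measured relative to \<open>y\<close>\<close>
  have centred: "(\<Sum>i\<in>A. c i *\<^sub>R g i) - h = (\<Sum>i\<in>A. c i *\<^sub>R (g i - h))"
    for g :: "'i \<Rightarrow> 'c::real_vector" and h
    by (simp add: scaleR_diff_right sum_subtractf scaleR_sum_left[symmetric] sum1)
  have "norm (xe - y) \<le> (\<Sum>i\<in>A. \<bar>c i\<bar>) * D"
    unfolding xe_def centred using near D by (rule norm_sum_scaleR_le)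
  then have far: "norm (\<xi> xe - \<xi> y) \<le> \<alpha> * ((\<Sum>i\<in>A. \<bar>c i\<bar>) * D)"
    using xi_near[of xe] \<alpha> by (meson mult_left_mono order_trans)
  have "norm (\<xi> (x i) - \<xi> y) \<le> \<alpha> * D" if "i \<in> A" for i
    using xi_near[of "x i"] near[OF that] \<alpha> by (meson mult_left_mono order_trans)
  then have close: "norm (\<Sum>i\<in>A. c i *\<^sub>R (\<xi> (x i) - \<xi> y)) \<le> (\<Sum>i\<in>A. \<bar>c i\<bar>) * (\<alpha> * D)"
    using \<alpha> D by (intro norm_sum_scaleR_le) auto
  have "\<xi> xe - (\<Sum>i\<in>A. c i *\<^sub>R \<xi> (x i)) = (\<xi> xe - \<xi> y) - (\<Sum>i\<in>A. c i *\<^sub>R (\<xi> (x i) - \<xi> y))"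
    using centred[of "\<lambda>i. \<xi> (x i)" "\<xi> y"] by (simp add: algebra_simps)
  then have "norm (\<xi> xe - (\<Sum>i\<in>A. c i *\<^sub>R \<xi> (x i)))
      \<le> norm (\<xi> xe - \<xi> y) + norm (\<Sum>i\<in>A. c i *\<^sub>R (\<xi> (x i) - \<xi> y))"
    by (simp only: norm_triangle_ineq4)
  also have "\<dots> \<le> 2 * \<alpha> * (\<Sum>i\<in>A. \<bar>c i\<bar>) * D"
    using add_mono[OF far close] by (simp add: algebra_simps)
  also have "\<dots> \<le> 2 * \<alpha> * C * D"
    using l1 \<alpha> D by (intro mult_right_mono mult_left_mono) auto
  finally show ?thesis
    unfolding xe_def .
qed

lemma norm_fixpoint_residual_combination_le:
  fixes \<xi> :: "'a::real_normed_vector \<Rightarrow> 'a" and c :: "'i \<Rightarrow> real"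
  assumes "linear L" and F: "\<And>x. F x = L x + \<xi> x" and "\<alpha>-lipschitz_on UNIV \<xi>"
    and "(\<Sum>i\<in>A. c i) = 1" "(\<Sum>i\<in>A. \<bar>c i\<bar>) \<le> C" "\<And>i. i \<in> A \<Longrightarrow> norm (x i - y) \<le> D"
  shows "norm (F (\<Sum>i\<in>A. c i *\<^sub>R x i) - (\<Sum>i\<in>A. c i *\<^sub>R x i))
    \<le> 2 * \<alpha> * C * D + norm (\<Sum>i\<in>A. c i *\<^sub>R (x i - F (x i)))"
proof -
  have "F (\<Sum>i\<in>A. c i *\<^sub>R x i) - (\<Sum>i\<in>A. c i *\<^sub>R x i)
      = (\<xi> (\<Sum>i\<in>A. c i *\<^sub>R x i) - (\<Sum>i\<in>A. c i *\<^sub>R \<xi> (x i))) - (\<Sum>i\<in>A. c i *\<^sub>R (x i - F (x i)))"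
    using assms(1) by (simp add: F linear_sum linear_scale scaleR_diff_right scaleR_add_right
        sum.distrib sum_subtractf)
  then have "norm (F (\<Sum>i\<in>A. c i *\<^sub>R x i) - (\<Sum>i\<in>A. c i *\<^sub>R x i))
      \<le> norm (\<xi> (\<Sum>i\<in>A. c i *\<^sub>R x i) - (\<Sum>i\<in>A. c i *\<^sub>R \<xi> (x i))) + norm (\<Sum>i\<in>A. c i *\<^sub>R (x i - F (x i)))"
    by (simp only: norm_triangle_ineq4)
  moreover have "norm (\<xi> (\<Sum>i\<in>A. c i *\<^sub>R x i) - (\<Sum>i\<in>A. c i *\<^sub>R \<xi> (x i))) \<le> 2 * \<alpha> * C * D"
    using assms(3-6) by (rule norm_lipschitz_combination_defect_le)
  ultimately show ?thesis
    by linarith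
qed

lemma norm_step_sub_funpow_le:
  fixes F \<xi> G :: "'a::real_normed_vector \<Rightarrow> 'a"
  assumes F_lip: "L-lipschitz_on UNIV F" "L \<le> 1" and F_decomp: "\<And>x. F x = G x + \<xi> x"
    and G_lin: "linear G" and G_nonexp: "\<And>v. norm (G v) \<le> norm v"
    and xi_lip: "\<alpha>-lipschitz_on UNIV \<xi>"
  shows "norm (((F ^^ i) x - (F ^^ Suc i) x) - (G ^^ i) (x - F x)) \<le> real i * (\<alpha> * norm (F x - x))"
proof -
  define r where "r i = (F ^^ i) x - (F ^^ Suc i) x" for i
  \<comment> \<open>\<open>r\<close> is a perturbation of the linear recursion \<open>r (Suc i) = G (r i)\<close>\<close>
  have "norm (r (Suc j) - G (r j)) \<le> \<alpha> * norm (F x - x)" for j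
  proof -
    have "r (Suc j) - G (r j) = \<xi> ((F ^^ j) x) - \<xi> ((F ^^ Suc j) x)"
      by (simp add: r_def F_decomp linear_diff[OF G_lin])
    then have "norm (r (Suc j) - G (r j)) \<le> \<alpha> * norm (r j)"
      using lipschitz_onD[OF xi_lip, of "(F ^^ j) x" "(F ^^ Suc j) x"] by (simp add: r_def dist_norm)
    moreover have "norm (r j) \<le> norm (F x - x)"
      unfolding r_def using F_lip by (rule norm_funpow_step_le)
    ultimately show ?thesis
      using lipschitz_on_nonneg[OF xi_lip] by (meson mult_left_mono order_trans)
  qed
  then have "norm (r i - (G ^^ i) (r 0)) \<le> real i * (\<alpha> * norm (F x - x))"
    by (intro norm_sub_funpow_le[OF G_lin G_nonexp])
  then show ?thesis
    by (simp add: r_def)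
qed

lemma norm_poly_combination_residuals_le:
  fixes F \<xi> G :: "'a::euclidean_space \<Rightarrow> 'a"
  assumes F_lip: "\<rho>-lipschitz_on UNIV F" and "\<rho> \<le> 1"
    and F_decomp: "\<And>x. F x = G x + \<xi> x"
    and G_lin: "linear G" and G_sa: "self_adjoint G"
    and G_psd: "\<And>v. 0 \<le> v \<bullet> G v" and G_le: "\<And>v. v \<bullet> G v \<le> \<rho> * (v \<bullet> v)"
    and xi_lip: "\<alpha>-lipschitz_on UNIV \<xi>"
    and deg: "degree p \<le> k"
  shows "norm (\<Sum>i\<le>k. coeff p i *\<^sub>R ((F ^^ i) x0 - (F ^^ Suc i) x0))
    \<le> (poly_max_abs \<rho> p + poly_l1 p * \<alpha> * real k) * norm (F x0 - x0)"
proof -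
  define r where "r i = (F ^^ i) x0 - (F ^^ Suc i) x0" for i
  define N where "N = norm (F x0 - x0)"
  have \<alpha>: "0 \<le> \<alpha>"
    using xi_lip by (rule lipschitz_on_nonneg)
  have spectrum: "\<And>v. 0 * (v \<bullet> v) \<le> v \<bullet> G v" "\<And>v. v \<bullet> G v \<le> \<rho> * (v \<bullet> v)"
    using G_psd G_le by simp_all
  have G_nonexp: "norm (G v) \<le> norm v" for v
    using norm_self_adjoint_le[OF G_lin G_sa spectrum, of 1] F_lip \<open>\<rho> \<le> 1\<close>
    by (simp add: lipschitz_on_nonneg)
  have drift: "norm (r i - (G ^^ i) (r 0)) \<le> real i * (\<alpha> * N)" for i
    using norm_step_sub_funpow_le[OF F_lip \<open>\<rho> \<le> 1\<close> F_decomp G_lin G_nonexp xi_lip]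
    by (simp add: r_def N_def)
  have "norm (r i - (G ^^ i) (r 0)) \<le> real k * (\<alpha> * N)" if "i \<in> {..k}" for i
  proof -
    have "real i * (\<alpha> * N) \<le> real k * (\<alpha> * N)"
      using that \<alpha> by (intro mult_right_mono) (simp_all add: N_def)
    then show ?thesis
      using drift[of i] by linarith
  qed
  then have perturbation:
    "norm (\<Sum>i\<le>k. coeff p i *\<^sub>R (r i - (G ^^ i) (r 0))) \<le> poly_l1 p * (real k * (\<alpha> * N))"
    unfolding poly_l1_eq_sum[OF deg] using \<alpha> by (intro norm_sum_scaleR_le) (simp_all add: N_def)
  have spectral: "norm (poly_apply p G (r 0)) \<le> poly_max_abs \<rho> p * N"
    using norm_poly_apply_le[OF G_lin G_sa spectrum, of p] abs_poly_le_poly_max_abs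
    by (simp add: r_def N_def norm_minus_commute)
  have "(\<Sum>i\<le>k. coeff p i *\<^sub>R r i)
      = poly_apply p G (r 0) + (\<Sum>i\<le>k. coeff p i *\<^sub>R (r i - (G ^^ i) (r 0)))"
    by (simp add: poly_apply_eq_sum[OF deg] scaleR_diff_right sum_subtractf)
  then have "norm (\<Sum>i\<le>k. coeff p i *\<^sub>R r i)
      \<le> norm (poly_apply p G (r 0)) + norm (\<Sum>i\<le>k. coeff p i *\<^sub>R (r i - (G ^^ i) (r 0)))"
    by (simp only: norm_triangle_ineq)
  also have "\<dots> \<le> poly_max_abs \<rho> p * N + poly_l1 p * (real k * (\<alpha> * N))"
    using spectral perturbation by (rule add_mono)
  also have "\<dots> = (poly_max_abs \<rho> p + poly_l1 p * \<alpha> * real k) * N"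
    by (simp add: algebra_simps)
  finally show ?thesis
    by (simp add: r_def N_def)
qed

theorem corollary1:
  fixes F \<xi> :: "real^'n \<Rightarrow> real^'n"
    and G :: "real^'n^'n"
    and \<rho> \<alpha> C \<epsilon> :: real
    and k :: nat
    and x0 :: "real^'n"
    and ct :: "nat \<Rightarrow> real"
    and pstar :: "real poly"
  assumes rho: "0 < \<rho>" "\<rho> < 1"
    and alpha: "0 \<le> \<alpha>"
    and F_lip: "\<rho>-lipschitz_on UNIV F"
    and F_decomp: "\<And>x. F x = G *v x + \<xi> x"
    and G_sym: "transpose G = G"
    and G_psd: "\<And>v. 0 \<le> v \<bullet> (G *v v)"
    and G_le: "\<And>v. v \<bullet> (G *v v) \<le> \<rho> * (v \<bullet> v)"
    and xi_lip: "\<alpha>-lipschitz_on UNIV \<xi>"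
    and C: "1 \<le> C"
    and k: "1 \<le> k"
    and eps: "0 < \<epsilon>"
    and ct_sum: "(\<Sum>i=0..k. ct i) = 1"
    and ct_l1: "(\<Sum>i=0..k. \<bar>ct i\<bar>) \<le> C"
    and ct_opt: "norm (\<Sum>i=0..k. ct i *\<^sub>R ((F ^^ i) x0 - (F ^^ Suc i) x0))
       \<le> (INF c\<in>{c::nat \<Rightarrow> real. (\<Sum>i=0..k. c i) = 1 \<and> (\<Sum>i=0..k. \<bar>c i\<bar>) \<le> C}.
             norm (\<Sum>i=0..k. c i *\<^sub>R ((F ^^ i) x0 - (F ^^ Suc i) x0)))
         + \<epsilon> * norm (F x0 - x0)"
    and pstar_adm: "admissible_poly k C pstar"
    and pstar_min: "\<And>p. admissible_poly k C p \<Longrightarrow> poly_max_abs \<rho> pstar \<le> poly_max_abs \<rho> p"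
  shows "let xe = (\<Sum>i=0..k. ct i *\<^sub>R (F ^^ i) x0) in
         norm (F xe - xe) \<le> (poly_max_abs \<rho> pstar + 3 * C * \<alpha> * real k + \<epsilon>) * norm (F x0 - x0)"
proof -
  define x where "x i = (F ^^ i) x0" for i
  define N where "N = norm (F x0 - x0)"
  define M where "M = poly_max_abs \<rho> pstar"
  define residual where "residual c = norm (\<Sum>i\<le>k. c i *\<^sub>R (x i - F (x i)))" for c
  have G: "linear ((*v) G)" "self_adjoint ((*v) G)"
    using G_sym by (simp_all add: self_adjoint_matrix_vector_mult)
  have "residual (coeff pstar) \<le> (M + poly_l1 pstar * \<alpha> * real k) * N"
    using norm_poly_combination_residuals_le[OF F_lip _ F_decomp G G_psd G_le xi_lip] pstar_adm rho
    by (simp add: residual_def x_def M_def N_def admissible_poly_def)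
  also have "\<dots> \<le> (M + C * \<alpha> * real k) * N"
    using pstar_adm alpha by (intro mult_right_mono add_left_mono) (simp_all add: admissible_poly_def N_def)
  moreover have "(INF c\<in>{c. (\<Sum>i\<le>k. c i) = 1 \<and> (\<Sum>i\<le>k. \<bar>c i\<bar>) \<le> C}. residual c) \<le> residual (coeff pstar)"
    using admissible_poly_coeffs[OF pstar_adm] by (intro cINF_lower bdd_belowI[of _ 0]) (auto simp: residual_def)
  ultimately have "residual ct \<le> (M + C * \<alpha> * real k + \<epsilon>) * N"
    using ct_opt by (simp add: residual_def x_def N_def atLeast0AtMost algebra_simps)
  moreover have "norm (F (\<Sum>i\<le>k. ct i *\<^sub>R x i) - (\<Sum>i\<le>k. ct i *\<^sub>R x i))
      \<le> 2 * \<alpha> * C * (real k * N) + residual ct"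
    unfolding residual_def using ct_sum ct_l1 norm_funpow_sub_le[OF F_lip] rho
    by (intro norm_fixpoint_residual_combination_le[OF G(1) F_decomp xi_lip])
      (simp_all add: atLeast0AtMost x_def N_def)
  ultimately show ?thesis
    by (simp add: Let_def x_def M_def N_def atLeast0AtMost algebra_simps)
qed

end
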